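(* Let $n\geq2$. Then there exist matrices $u,v,w\in[M_n(\mathbb{Z}),M_n(\mathbb{Z})]_1$ such that $[u,v]$ is invertible in $M_n(\mathbb{Z})$ and $v=vw$.
   Context: $[x,y]=xy-yx$, and $[M_n(\mathbb{Z}),M_n(\mathbb{Z})]_1=\{[x,y]:x,y\in M_n(\mathbb{Z})\}$ is the set of commutators in the ring of $n\times n$ integer matrices. *)

theory Defs
  imports "HOL-Analysis.Analysis"
begin

definition mat_commutator :: "int^'n^'n \<Rightarrow> int^'n^'n \<Rightarrow> int^'n^'n" where
  "mat_commutator x y = x ** y - y ** x"

definition commutators1 :: "(int^'n^'n) set" where
  "commutators1 = {mat_commutator x y | x y. True}"

end

theory Submission
  imports Defs
begin

text \<open>
  Witnesses for sizes m and k combine block-diagonally into witnesses for size m + k, because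
  commutators, products and inverses of block-diagonal matrices are computed blockwise.
  Explicit witnesses exist for n = 2 and n = 3, and every n \<ge> 2 is a sum of 2s and 3s.
\<close>

text \<open>
  To let the size vary within one statement, an n \<times> n matrix is modelled as a function
  nat \<Rightarrow> nat \<Rightarrow> 'a vanishing outside {..<n} \<times> {..<n}; it is transported to
  'a^'n^'n along a bijection between 'n and {..<CARD('n)}.
\<close>

definition sq_mult :: "nat \<Rightarrow> (nat \<Rightarrow> nat \<Rightarrow> 'a::semiring_0) \<Rightarrow> (nat \<Rightarrow> nat \<Rightarrow> 'a) \<Rightarrow> nat \<Rightarrow> nat \<Rightarrow> 'a"
  where "sq_mult n A B = (\<lambda>i j. if i < n \<and> j < n then \<Sum>k<n. A i k * B k j else 0)"

definition sq_one :: "nat \<Rightarrow> nat \<Rightarrow> nat \<Rightarrow> 'a::zero_neq_one"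
  where "sq_one n = (\<lambda>i j. if i < n \<and> i = j then 1 else 0)"

definition sq_commutator :: "nat \<Rightarrow> (nat \<Rightarrow> nat \<Rightarrow> 'a::ring) \<Rightarrow> (nat \<Rightarrow> nat \<Rightarrow> 'a) \<Rightarrow> nat \<Rightarrow> nat \<Rightarrow> 'a"
  where "sq_commutator n x y = (\<lambda>i j. sq_mult n x y i j - sq_mult n y x i j)"

definition sq_commutators :: "nat \<Rightarrow> (nat \<Rightarrow> nat \<Rightarrow> 'a::ring) set"
  where "sq_commutators n = {sq_commutator n x y | x y. True}"

definition sq_invertible :: "nat \<Rightarrow> (nat \<Rightarrow> nat \<Rightarrow> 'a::ring_1) \<Rightarrow> bool"
  where "sq_invertible n A \<longleftrightarrow> (\<exists>B. sq_mult n A B = sq_one n \<and> sq_mult n B A = sq_one n)"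

definition commutator_witness :: "nat \<Rightarrow> (nat \<Rightarrow> nat \<Rightarrow> 'a::ring_1) \<Rightarrow> (nat \<Rightarrow> nat \<Rightarrow> 'a) \<Rightarrow> (nat \<Rightarrow> nat \<Rightarrow> 'a) \<Rightarrow> bool"
  where "commutator_witness n u v w \<longleftrightarrow>
    u \<in> sq_commutators n \<and> v \<in> sq_commutators n \<and> w \<in> sq_commutators n \<and>
    sq_invertible n (sq_commutator n u v) \<and> v = sq_mult n v w"

definition block_diag :: "nat \<Rightarrow> (nat \<Rightarrow> nat \<Rightarrow> 'a::zero) \<Rightarrow> (nat \<Rightarrow> nat \<Rightarrow> 'a) \<Rightarrow> nat \<Rightarrow> nat \<Rightarrow> 'a"
  where "block_diag m A B = (\<lambda>i j.
    if i < m \<and> j < m then A i j else if m \<le> i \<and> m \<le> j then B (i - m) (j - m) else 0)"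

lemma sum_lessThan_add:
  fixes f :: "nat \<Rightarrow> 'a::comm_monoid_add"
  shows "(\<Sum>k<m + n. f k) = (\<Sum>k<m. f k) + (\<Sum>k<n. f (m + k))"
  by (induction n) (simp_all add: add.assoc)

lemma sq_commutator_in_sq_commutators: "sq_commutator n x y \<in> sq_commutators n"
  unfolding sq_commutators_def by blast

lemma block_diag_mult:
  "sq_mult (m + n) (block_diag m A B) (block_diag m C D) = block_diag m (sq_mult m A C) (sq_mult n B D)"
proof (intro ext)
  fix i j
  show "sq_mult (m + n) (block_diag m A B) (block_diag m C D) i j =
        block_diag m (sq_mult m A C) (sq_mult n B D) i j"
    by (cases "i < m + n \<and> j < m + n")
       (auto simp: sq_mult_def block_diag_def sum_lessThan_add intro!: sum.neutral)
qed

lemma block_diag_commutator: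
  "sq_commutator (m + n) (block_diag m A B) (block_diag m C D) =
   block_diag m (sq_commutator m A C) (sq_commutator n B D)"
  unfolding sq_commutator_def block_diag_mult by (auto simp: block_diag_def fun_eq_iff)

lemma sq_one_add: "sq_one (m + n) = block_diag m (sq_one m) (sq_one n)"
  by (auto simp: sq_one_def block_diag_def fun_eq_iff)

lemma block_diag_in_sq_commutators:
  assumes "A \<in> sq_commutators m" and "B \<in> sq_commutators n"
  shows "block_diag m A B \<in> sq_commutators (m + n)"
proof -
  from assms obtain a b c d where "A = sq_commutator m a b" "B = sq_commutator n c d"
    unfolding sq_commutators_def by blast
  then have "block_diag m A B = sq_commutator (m + n) (block_diag m a c) (block_diag m b d)"
    by (simp add: block_diag_commutator)
  then show ?thesis unfolding sq_commutators_def by blast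
qed

lemma sq_invertible_block_diag:
  assumes "sq_invertible m A" and "sq_invertible n B"
  shows "sq_invertible (m + n) (block_diag m A B)"
proof -
  from assms obtain A' B' where
    "sq_mult m A A' = sq_one m" "sq_mult m A' A = sq_one m"
    "sq_mult n B B' = sq_one n" "sq_mult n B' B = sq_one n"
    unfolding sq_invertible_def by blast
  then show ?thesis
    unfolding sq_invertible_def
    by (intro exI[of _ "block_diag m A' B'"]) (simp add: block_diag_mult sq_one_add)
qed

lemma commutator_witness_block_diag:
  assumes "commutator_witness m u v w" and "commutator_witness n u' v' w'"
  shows "commutator_witness (m + n) (block_diag m u u') (block_diag m v v') (block_diag m w w')"
  using assms
  by (simp add: commutator_witness_def block_diag_in_sq_commutators block_diag_commutator
      sq_invertible_block_diag block_diag_mult)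

definition sq_of_rows :: "'a::zero list list \<Rightarrow> nat \<Rightarrow> nat \<Rightarrow> 'a"
  where "sq_of_rows L = (\<lambda>i j. if i < length L \<and> j < length L then L ! i ! j else 0)"

lemma sq_eqI:
  "(\<And>i j. i < n \<Longrightarrow> j < n \<Longrightarrow> A i j = B i j) \<Longrightarrow> (\<And>i j. \<not> (i < n \<and> j < n) \<Longrightarrow> A i j = B i j) \<Longrightarrow> A = B"
  by (auto simp: fun_eq_iff)

lemma less_2_cases: "(i::nat) < 2 \<longleftrightarrow> i = 0 \<or> i = 1" by auto
lemma less_3_cases: "(i::nat) < 3 \<longleftrightarrow> i = 0 \<or> i = 1 \<or> i = 2" by auto

lemma sq_mult_2: "sq_mult 2 A B i j = (if i < 2 \<and> j < 2 then A i 0 * B 0 j + A i 1 * B 1 j else 0)"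
  by (simp add: sq_mult_def numeral_2_eq_2)

lemma sq_mult_3:
  "sq_mult 3 A B i j = (if i < 3 \<and> j < 3 then A i 0 * B 0 j + A i 1 * B 1 j + A i 2 * B 2 j else 0)"
proof -
  have "{..<3::nat} = {0, 1, 2}" by auto
  then show ?thesis by (simp add: sq_mult_def add.assoc)
qed

lemma commutator_witness_2:
  "commutator_witness 2 (sq_of_rows [[0, 0], [1, 0]]) (sq_of_rows [[0, 1], [0, 0]])
     (sq_of_rows [[-1, 0], [0, 1 :: 'a::ring_1]])"
proof -
  let ?u = "sq_of_rows [[0, 0], [1, 0]] :: nat \<Rightarrow> nat \<Rightarrow> 'a"
  let ?v = "sq_of_rows [[0, 1], [0, 0]] :: nat \<Rightarrow> nat \<Rightarrow> 'a"
  let ?w = "sq_of_rows [[-1, 0], [0, 1]] :: nat \<Rightarrow> nat \<Rightarrow> 'a"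
  let ?e = "sq_of_rows [[1, 0], [0, 0]] :: nat \<Rightarrow> nat \<Rightarrow> 'a"
  have comm: "sq_commutator 2 ?u ?e = ?u" "sq_commutator 2 ?e ?v = ?v" "sq_commutator 2 ?u ?v = ?w"
    by (rule sq_eqI; auto simp: sq_commutator_def sq_mult_2 less_2_cases sq_of_rows_def)+
  have "sq_mult 2 ?w ?w = sq_one 2" and v_fixed: "sq_mult 2 ?v ?w = ?v"
    by (rule sq_eqI; auto simp: sq_mult_2 less_2_cases sq_of_rows_def sq_one_def less_Suc_eq)+
  then have "sq_invertible 2 (sq_commutator 2 ?u ?v)"
    unfolding sq_invertible_def comm(3) by blast
  then show ?thesis
    using comm[THEN subst, of "\<lambda>A. A \<in> sq_commutators 2"]
    by (simp add: commutator_witness_def v_fixed sq_commutator_in_sq_commutators)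
qed

lemma commutator_witness_3:
  "commutator_witness 3 (sq_of_rows [[0, 1, 0], [0, 0, 0], [1, 0, 0]])
     (sq_of_rows [[0, 1, 0], [0, 0, 1], [0, 0, 0]]) (sq_of_rows [[-2, 0, 0], [0, 1, 0], [0, 0, 1 :: 'a::ring_1]])"
proof -
  let ?u = "sq_of_rows [[0, 1, 0], [0, 0, 0], [1, 0, 0]] :: nat \<Rightarrow> nat \<Rightarrow> 'a"
  let ?v = "sq_of_rows [[0, 1, 0], [0, 0, 1], [0, 0, 0]] :: nat \<Rightarrow> nat \<Rightarrow> 'a"
  let ?w = "sq_of_rows [[-2, 0, 0], [0, 1, 0], [0, 0, 1]] :: nat \<Rightarrow> nat \<Rightarrow> 'a"
  let ?c = "sq_of_rows [[0, 0, 1], [-1, 0, 0], [0, 1, 0]] :: nat \<Rightarrow> nat \<Rightarrow> 'a"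
  let ?c' = "sq_of_rows [[0, -1, 0], [0, 0, 1], [1, 0, 0]] :: nat \<Rightarrow> nat \<Rightarrow> 'a"
  have comm:
    "sq_commutator 3 (sq_of_rows [[0, 0, 0], [0, 1, 0], [0, 0, 1]]) (sq_of_rows [[0, -1, 0], [0, 0, 0], [1, 0, 0]]) = ?u"
    "sq_commutator 3 ?v (sq_of_rows [[0, 0, 0], [0, 1, 0], [0, 0, 2]]) = ?v"
    "sq_commutator 3 (sq_of_rows [[0, 0, 0], [2, 0, 0], [0, 1, 0]]) ?v = ?w"
    "sq_commutator 3 ?u ?v = ?c"
    by (rule sq_eqI; auto simp: sq_commutator_def sq_mult_3 less_3_cases sq_of_rows_def)+
  have "sq_mult 3 ?c ?c' = sq_one 3" "sq_mult 3 ?c' ?c = sq_one 3" and v_fixed: "sq_mult 3 ?v ?w = ?v"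
    by (rule sq_eqI; auto simp: sq_mult_3 less_3_cases sq_of_rows_def sq_one_def less_Suc_eq)+
  then have "sq_invertible 3 (sq_commutator 3 ?u ?v)"
    unfolding sq_invertible_def comm(4) by blast
  then show ?thesis
    using comm(1-3)[THEN subst, of "\<lambda>A. A \<in> sq_commutators 3"]
    by (simp add: commutator_witness_def v_fixed sq_commutator_in_sq_commutators)
qed

lemma ex_commutator_witness:
  assumes "2 \<le> n"
  shows "\<exists>u v w :: nat \<Rightarrow> nat \<Rightarrow> 'a::ring_1. commutator_witness n u v w"
  using assms
proof (induction n rule: less_induct)
  case (less n)
  show ?case
  proof (cases "n \<le> 3")
    case True
    then have "n = 2 \<or> n = 3" using less.prems by auto
    then show ?thesis using commutator_witness_2 commutator_witness_3 by blast
  next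
    case False
    define m where "m = n - 2"
    then have n: "n = 2 + m" and "2 \<le> m" "m < n" using False by auto
    then obtain u v w :: "nat \<Rightarrow> nat \<Rightarrow> 'a" where "commutator_witness m u v w"
      using less.IH by blast
    moreover obtain u' v' w' :: "nat \<Rightarrow> nat \<Rightarrow> 'a" where "commutator_witness 2 u' v' w'"
      using commutator_witness_2 by blast
    ultimately show ?thesis
      unfolding n by (blast intro: commutator_witness_block_diag)
  qed
qed

definition vec_of_sq :: "('n::finite \<Rightarrow> nat) \<Rightarrow> (nat \<Rightarrow> nat \<Rightarrow> 'a) \<Rightarrow> 'a^'n^'n"
  where "vec_of_sq f A = (\<chi> i j. A (f i) (f j))"

context
  fixes f :: "'n::finite \<Rightarrow> nat"
  assumes f: "bij_betw f UNIV {..<CARD('n)}"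
begin

lemma vec_of_sq_mult:
  "vec_of_sq f (A :: nat \<Rightarrow> nat \<Rightarrow> 'a::semiring_1) ** vec_of_sq f B = vec_of_sq f (sq_mult CARD('n) A B)"
proof -
  have "f i < CARD('n)" for i using bij_betw_apply[OF f] by auto
  moreover have "(\<Sum>k\<in>UNIV. A (f i) (f k) * B (f k) (f j)) = (\<Sum>k<CARD('n). A (f i) k * B k (f j))" for i j
    using sum.reindex_bij_betw[OF f, of "\<lambda>k. A (f i) k * B k (f j)"] by simp
  ultimately show ?thesis
    by (simp add: vec_eq_iff matrix_matrix_mult_def sq_mult_def vec_of_sq_def)
qed

lemma vec_of_sq_commutator:
  "mat_commutator (vec_of_sq f A) (vec_of_sq f B) = vec_of_sq f (sq_commutator CARD('n) A B)"
  unfolding mat_commutator_def vec_of_sq_mult by (simp add: vec_eq_iff sq_commutator_def vec_of_sq_def)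

lemma vec_of_sq_one: "vec_of_sq f (sq_one CARD('n)) = (mat 1 :: 'a::semiring_1^'n^'n)"
proof -
  have "f i < CARD('n)" for i using bij_betw_apply[OF f] by auto
  moreover have "f i = f j \<longleftrightarrow> i = j" for i j using bij_betw_imp_inj_on[OF f] by (auto dest: injD)
  ultimately show ?thesis by (simp add: vec_eq_iff mat_def sq_one_def vec_of_sq_def)
qed

lemma vec_of_sq_commutator_witness:
  assumes "commutator_witness CARD('n) u v w"
  shows "vec_of_sq f u \<in> commutators1" "vec_of_sq f v \<in> commutators1" "vec_of_sq f w \<in> commutators1"
    "invertible (mat_commutator (vec_of_sq f u) (vec_of_sq f v))"
    "vec_of_sq f v = vec_of_sq f v ** vec_of_sq f w"
proof -
  have "vec_of_sq f A \<in> commutators1" if "A \<in> sq_commutators CARD('n)" for A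
  proof -
    from that obtain x y where "A = sq_commutator CARD('n) x y"
      unfolding sq_commutators_def by blast
    then have "vec_of_sq f A = mat_commutator (vec_of_sq f x) (vec_of_sq f y)"
      by (simp add: vec_of_sq_commutator)
    then show ?thesis unfolding commutators1_def by blast
  qed
  then show "vec_of_sq f u \<in> commutators1" "vec_of_sq f v \<in> commutators1" "vec_of_sq f w \<in> commutators1"
    using assms by (simp_all add: commutator_witness_def)
  from assms obtain B where "sq_mult CARD('n) (sq_commutator CARD('n) u v) B = sq_one CARD('n)"
    "sq_mult CARD('n) B (sq_commutator CARD('n) u v) = sq_one CARD('n)"
    unfolding commutator_witness_def sq_invertible_def by blast
  then show "invertible (mat_commutator (vec_of_sq f u) (vec_of_sq f v))"
    unfolding invertible_def vec_of_sq_commutator by (metis vec_of_sq_mult vec_of_sq_one)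
  have "sq_mult CARD('n) v w = v"
    using assms unfolding commutator_witness_def by argo
  then show "vec_of_sq f v = vec_of_sq f v ** vec_of_sq f w"
    by (simp add: vec_of_sq_mult)
qed

end

theorem lemma5p14:
  assumes "CARD('n::finite) \<ge> 2"
  shows "\<exists>u v w :: int^'n^'n.
           u \<in> commutators1 \<and> v \<in> commutators1 \<and> w \<in> commutators1 \<and>
           invertible (mat_commutator u v) \<and> v = v ** w"
proof -
  obtain u v w :: "nat \<Rightarrow> nat \<Rightarrow> int" where witness: "commutator_witness CARD('n) u v w"
    using ex_commutator_witness[OF assms] by blast
  obtain f :: "'n \<Rightarrow> nat" where f: "bij_betw f UNIV {..<CARD('n)}"
    using ex_bij_betw_finite_nat[of "UNIV :: 'n set"] by (auto simp: atLeast0LessThan)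
  show ?thesis
    using vec_of_sq_commutator_witness[OF f witness] by blast
qed

end
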